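(* Let $\Omega$ and $\Omega'$ be two causal orders on the same finite set of events $E$, let $\underline{I}=(I_\omega)_{\omega\in E}$ be a family of non-empty finite sets, and let $\Theta=\mathrm{Hist}(\Omega,\underline{I})$, $\Theta'=\mathrm{Hist}(\Omega',\underline{I})$. Then the meet $\Theta\wedge\Theta'$ is tight if and only if for every $\omega\in E$ we have $\downarrow_\Omega\omega\subseteq\downarrow_{\Omega'}\omega$ or $\downarrow_{\Omega'}\omega\subseteq\downarrow_\Omega\omega$.
   Context: A causal order $\Omega$ on $E$ is a preorder (reflexive transitive relation) $\le_\Omega$ on $E$; $\downarrow_\Omega\omega=\{\xi\in E:\xi\le_\Omega\omega\}$. Partial functions on $\underline{I}$ are functions $f$ with $\mathrm{dom}(f)\subseteq E$ and $f(\omega)\in I_\omega$, ordered by restriction ($f\le g$ iff $\mathrm{dom}(f)\subseteq\mathrm{dom}(g)$ and $g|_{\mathrm{dom}(f)}=f$). $\mathrm{Hist}(\Omega,\underline{I})=\bigcup_{\xi\in E}\prod_{\omega\in\downarrow_\Omega\xi}I_\omega$ (all partial functions whose domain is $\downarrow_\Omega\xi$ for some $\xi$). Partial functions are compatible if they agree on common domain; a compatible set $\mathcal F$ has join $\bigvee\mathcal F$ (union of the functions). For a set $\Theta$ of partial functions, $\mathrm{Ext}(\Theta)=\{\bigvee\mathcal F:\emptyset\ne\mathcal F\subseteq\Theta\text{ compatible}\}$; for a set $W$, $\mathrm{Prime}(W)=\{w\in W:\text{for all compatible }\mathcal F\subseteq W,\ w=\bigvee\mathcal F\Rightarrow w\in\mathcal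 F\}$. The meet is $\Theta\wedge\Theta'=\mathrm{Prime}(\mathrm{Ext}(\Theta)\cup\mathrm{Ext}(\Theta'))$. For a space $\Theta$ and $h\in\mathrm{Ext}(\Theta)$, $\mathrm{tips}_\Theta(h)=\mathrm{dom}(h)\setminus\bigcup\{\mathrm{dom}(k):k\in\mathrm{Ext}(\Theta),k<h\}$. A space $\Theta$ is tight if for every $k\in\mathrm{Ext}(\Theta)$ and every $\omega\in\mathrm{dom}(k)$ there is a unique $h\in\Theta$ with $h\le k$ and $\omega\in\mathrm{tips}_\Theta(h)$. *)

theory Defs
  imports Main
begin

definition causal_order :: "'e set \<Rightarrow> 'e rel \<Rightarrow> bool" where
  "causal_order E R \<longleftrightarrow> R \<subseteq> E \<times> E \<and> refl_on E R \<and> trans R"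

definition down :: "'e set \<Rightarrow> 'e rel \<Rightarrow> 'e \<Rightarrow> 'e set" where
  "down E R w = {x \<in> E. (x, w) \<in> R}"

text \<open>Partial functions are maps ('e \<rightharpoonup> 'v); the order is restriction, i.e. map_le.\<close>
definition Hist :: "'e set \<Rightarrow> 'e rel \<Rightarrow> ('e \<Rightarrow> 'v set) \<Rightarrow> ('e \<rightharpoonup> 'v) set" where
  "Hist E R I = {f. \<exists>x\<in>E. dom f = down E R x \<and> (\<forall>w\<in>dom f. the (f w) \<in> I w)}"

definition compatible :: "('e \<rightharpoonup> 'v) set \<Rightarrow> bool" where
  "compatible F \<longleftrightarrow> (\<forall>f\<in>F. \<forall>g\<in>F. \<forall>x\<in>dom f \<inter> dom g. f x = g x)"

definition join :: "('e \<rightharpoonup> 'v) set \<Rightarrow> ('e \<rightharpoonup> 'v)" where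
  "join F x = (if \<exists>f\<in>F. x \<in> dom f then (SOME f. f \<in> F \<and> x \<in> dom f) x else None)"

definition Ext :: "('e \<rightharpoonup> 'v) set \<Rightarrow> ('e \<rightharpoonup> 'v) set" where
  "Ext T = {join F | F. F \<noteq> {} \<and> F \<subseteq> T \<and> compatible F}"

definition Prime :: "('e \<rightharpoonup> 'v) set \<Rightarrow> ('e \<rightharpoonup> 'v) set" where
  "Prime W = {w \<in> W. \<forall>F. F \<subseteq> W \<and> compatible F \<and> w = join F \<longrightarrow> w \<in> F}"

definition meet :: "('e \<rightharpoonup> 'v) set \<Rightarrow> ('e \<rightharpoonup> 'v) set \<Rightarrow> ('e \<rightharpoonup> 'v) set" where
  "meet T T' = Prime (Ext T \<union> Ext T')"

definition tips :: "('e \<rightharpoonup> 'v) set \<Rightarrow> ('e \<rightharpoonup> 'v) \<Rightarrow> 'e set" where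
  "tips T h = dom h - \<Union>{dom k | k. k \<in> Ext T \<and> k \<subseteq>\<^sub>m h \<and> k \<noteq> h}"

definition tight :: "('e \<rightharpoonup> 'v) set \<Rightarrow> bool" where
  "tight T \<longleftrightarrow> (\<forall>k\<in>Ext T. \<forall>w\<in>dom k. \<exists>!h. h \<in> T \<and> h \<subseteq>\<^sub>m k \<and> w \<in> tips T h)"

end

theory Submission
  imports Defs
begin

(* Every map in Ext \<Theta> \<union> Ext \<Theta>', and every map in the extension of the meet, is covered by
   histories of \<Theta> or \<Theta>' lying below it; so whenever its domain contains an event w, it
   contains the \<Omega>-past or the \<Omega>'-past of w.  Hence a map in Ext \<Theta> \<union> Ext \<Theta>' whose domain is
   a minimal past of w is prime and has w as a tip.  If the two pasts of w are comparable, the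
   restriction of an extension k to the smaller one is therefore the unique prime below k with
   tip w.  If they are incomparable, two histories agreeing on the two pasts are distinct primes
   below their join, both with tip w. *)

lemma join_eq:
  assumes "compatible F" "f \<in> F" "x \<in> dom f"
  shows "join F x = f x"
proof -
  let ?g = "SOME g. g \<in> F \<and> x \<in> dom g"
  have "?g \<in> F \<and> x \<in> dom ?g"
    using assms(2,3) by (rule someI[where x = f, OF conjI])
  then show ?thesis
    using assms unfolding join_def compatible_def by auto
qed

lemma dom_join: "dom (join F) = \<Union>(dom ` F)"
proof (intro set_eqI iffI)
  fix x assume "x \<in> dom (join F)"
  then show "x \<in> \<Union>(dom ` F)"
    unfolding join_def by (auto split: if_splits)
next
  fix x assume "x \<in> \<Union>(dom ` F)"
  then have "\<exists>g. g \<in> F \<and> x \<in> dom g" by blast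
  with someI_ex[OF this] show "x \<in> dom (join F)"
    unfolding join_def by (auto simp: dom_def)
qed

lemma map_le_join: "compatible F \<Longrightarrow> f \<in> F \<Longrightarrow> f \<subseteq>\<^sub>m join F"
  by (simp add: map_le_def join_eq)

lemma join_singleton: "join {f} = f"
proof
  fix x
  have "compatible {f}"
    by (simp add: compatible_def)
  then show "join {f} x = f x"
    using join_eq[of "{f}" f x] dom_join[of "{f}"] by (cases "x \<in> dom f") auto
qed

lemma map_le_if_dom_subset: "f \<subseteq>\<^sub>m k \<Longrightarrow> g \<subseteq>\<^sub>m k \<Longrightarrow> dom f \<subseteq> dom g \<Longrightarrow> f \<subseteq>\<^sub>m g"
  unfolding map_le_def by (metis subsetD)

lemma restrict_map_le: "m |` A \<subseteq>\<^sub>m m"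
  by (simp add: map_le_def)

lemma compatible_if_map_le: "(\<And>f. f \<in> F \<Longrightarrow> f \<subseteq>\<^sub>m g) \<Longrightarrow> compatible F"
  unfolding compatible_def map_le_def by (metis IntD1 IntD2)

lemma join_in_Ext: "F \<noteq> {} \<Longrightarrow> F \<subseteq> T \<Longrightarrow> compatible F \<Longrightarrow> join F \<in> Ext T"
  unfolding Ext_def by blast

lemma subset_Ext: "T \<subseteq> Ext T"
proof
  fix f assume "f \<in> T"
  then show "f \<in> Ext T"
    using join_in_Ext[of "{f}" T] by (simp add: join_singleton compatible_def)
qed

lemma Ext_mono: "T \<subseteq> T' \<Longrightarrow> Ext T \<subseteq> Ext T'"
  unfolding Ext_def by blast

lemma Prime_subset: "Prime W \<subseteq> W"
  unfolding Prime_def by blast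

lemma in_Prime_if_minimal:
  assumes "h \<in> W" "w \<in> dom h"
    and minimal: "\<And>f. f \<in> W \<Longrightarrow> f \<subseteq>\<^sub>m h \<Longrightarrow> w \<in> dom f \<Longrightarrow> f = h"
  shows "h \<in> Prime W"
  unfolding Prime_def
proof (intro CollectI conjI allI impI)
  fix F assume F: "F \<subseteq> W \<and> compatible F \<and> h = join F"
  then have "w \<in> \<Union>(dom ` F)"
    using \<open>w \<in> dom h\<close> dom_join by metis
  then obtain f where "f \<in> F" "w \<in> dom f"
    by blast
  moreover have "f = h"
    using minimal F \<open>f \<in> F\<close> \<open>w \<in> dom f\<close> map_le_join by blast
  ultimately show "h \<in> F" by simp
qed (fact \<open>h \<in> W\<close>)

lemma in_tips_iff:
  "w \<in> tips T h \<longleftrightarrow> w \<in> dom h \<and> (\<forall>k\<in>Ext T. k \<subseteq>\<^sub>m h \<longrightarrow> w \<in> dom k \<longrightarrow> k = h)"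
  unfolding tips_def by blast

definition covered :: "('e \<rightharpoonup> 'v) set \<Rightarrow> ('e \<rightharpoonup> 'v) set" where
  "covered T = {g. \<forall>x\<in>dom g. \<exists>f\<in>T. f \<subseteq>\<^sub>m g \<and> x \<in> dom f}"

lemma subset_covered: "T \<subseteq> covered T"
  unfolding covered_def using map_le_refl by blast

lemma Ext_subset_covered:
  assumes "S \<subseteq> covered T"
  shows "Ext S \<subseteq> covered T"
proof
  fix g assume "g \<in> Ext S"
  then obtain F where F: "F \<subseteq> S" "compatible F" and g: "g = join F"
    unfolding Ext_def by blast
  have "\<exists>h\<in>T. h \<subseteq>\<^sub>m g \<and> x \<in> dom h" if "x \<in> dom g" for x
  proof -
    have "x \<in> \<Union>(dom ` F)"
      using \<open>x \<in> dom g\<close> g dom_join by metis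
    then obtain f where "f \<in> F" "x \<in> dom f"
      by blast
    moreover have "f \<in> covered T"
      using \<open>f \<in> F\<close> F(1) assms by blast
    ultimately obtain h where "h \<in> T" "h \<subseteq>\<^sub>m f" "x \<in> dom h"
      unfolding covered_def by blast
    moreover have "f \<subseteq>\<^sub>m g"
      using g map_le_join[OF F(2) \<open>f \<in> F\<close>] by simp
    ultimately show ?thesis
      using map_le_trans by blast
  qed
  then show "g \<in> covered T"
    by (simp add: covered_def)
qed

lemma Ext_Un_subset_covered: "Ext T \<union> Ext T' \<subseteq> covered (T \<union> T')"
  using Ext_mono[of T "T \<union> T'"] Ext_mono[of T' "T \<union> T'"]
    Ext_subset_covered[OF subset_covered[of "T \<union> T'"]] by blast

lemma Ext_meet_subset_covered: "Ext (meet T T') \<subseteq> covered (T \<union> T')"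
  using Ext_subset_covered Ext_Un_subset_covered Prime_subset
  unfolding meet_def by (metis subset_trans)

lemma down_subset_down:
  "causal_order E R \<Longrightarrow> x \<in> down E R y \<Longrightarrow> down E R x \<subseteq> down E R y"
  unfolding causal_order_def down_def trans_def by blast

lemma in_down_self: "causal_order E R \<Longrightarrow> w \<in> E \<Longrightarrow> w \<in> down E R w"
  unfolding causal_order_def down_def refl_on_def by blast

lemma Hist_down_subset_dom:
  assumes "causal_order E R" "h \<in> Hist E R I" "x \<in> dom h"
  shows "down E R x \<subseteq> dom h"
proof -
  obtain y where "dom h = down E R y"
    using assms(2) unfolding Hist_def by blast
  then show ?thesis
    using assms(1,3) down_subset_down by metis
qed

lemma Hist_value: "h \<in> Hist E R I \<Longrightarrow> x \<in> dom h \<Longrightarrow> x \<in> E \<and> the (h x) \<in> I x"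
  unfolding Hist_def down_def by auto

lemma restrict_in_Hist:
  assumes "w \<in> E" "down E R w \<subseteq> dom g" "\<forall>x\<in>down E R w. the (g x) \<in> I x"
  shows "g |` down E R w \<in> Hist E R I"
  unfolding Hist_def using assms by auto

locale two_causal_orders =
  fixes E :: "'e set" and R R' :: "'e rel" and I :: "'e \<Rightarrow> 'v set"
  assumes causal_R: "causal_order E R" and causal_R': "causal_order E R'"
begin

abbreviation \<Theta> :: "('e \<rightharpoonup> 'v) set" where "\<Theta> \<equiv> Hist E R I"
abbreviation \<Theta>' :: "('e \<rightharpoonup> 'v) set" where "\<Theta>' \<equiv> Hist E R' I"

lemma covered_down_subset_dom:
  assumes "g \<in> covered (\<Theta> \<union> \<Theta>')" "x \<in> dom g"
  shows "down E R x \<subseteq> dom g \<or> down E R' x \<subseteq> dom g"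
proof -
  obtain h where "h \<in> \<Theta> \<union> \<Theta>'" "h \<subseteq>\<^sub>m g" "x \<in> dom h"
    using assms unfolding covered_def by blast
  then show ?thesis
    using Hist_down_subset_dom[OF causal_R] Hist_down_subset_dom[OF causal_R']
      map_le_implies_dom_le by blast
qed

lemma covered_value:
  assumes "g \<in> covered (\<Theta> \<union> \<Theta>')" "x \<in> dom g"
  shows "x \<in> E \<and> the (g x) \<in> I x"
proof -
  obtain h where "h \<in> \<Theta> \<union> \<Theta>'" "h \<subseteq>\<^sub>m g" "x \<in> dom h"
    using assms unfolding covered_def by blast
  then show ?thesis
    using Hist_value by (metis Un_iff map_le_def)
qed

lemma in_meet_tips:
  assumes "h \<in> Ext \<Theta> \<union> Ext \<Theta>'" "w \<in> dom h"
    and no_smaller_past: "\<And>D. D \<in> {down E R w, down E R' w} \<Longrightarrow> D \<subseteq> dom h \<Longrightarrow> D = dom h"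
  shows "h \<in> meet \<Theta> \<Theta>'" "w \<in> tips (meet \<Theta> \<Theta>') h"
proof -
  have minimal: "g = h" if g: "g \<in> covered (\<Theta> \<union> \<Theta>')" "g \<subseteq>\<^sub>m h" "w \<in> dom g" for g
  proof -
    have "down E R w \<subseteq> dom g \<or> down E R' w \<subseteq> dom g"
      using covered_down_subset_dom[OF g(1,3)] .
    then obtain D where "D \<in> {down E R w, down E R' w}" "D \<subseteq> dom g"
      by blast
    moreover have "dom g \<subseteq> dom h"
      using map_le_implies_dom_le[OF \<open>g \<subseteq>\<^sub>m h\<close>] .
    ultimately have "dom h \<subseteq> dom g"
      using no_smaller_past by (metis subset_trans)
    then have "h \<subseteq>\<^sub>m g"
      using map_le_if_dom_subset[OF map_le_refl \<open>g \<subseteq>\<^sub>m h\<close>] by blast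
    with \<open>g \<subseteq>\<^sub>m h\<close> show "g = h"
      by (rule map_le_antisym)
  qed
  show "h \<in> meet \<Theta> \<Theta>'"
    unfolding meet_def using assms(1,2) minimal Ext_Un_subset_covered
    by (intro in_Prime_if_minimal) blast+
  show "w \<in> tips (meet \<Theta> \<Theta>') h"
    unfolding in_tips_iff using assms(2) minimal Ext_meet_subset_covered by blast
qed

lemma comparable_if_tight_meet:
  assumes tight: "tight (meet \<Theta> \<Theta>')" and nonempty: "\<forall>w\<in>E. I w \<noteq> {}"
  shows "\<forall>w\<in>E. down E R w \<subseteq> down E R' w \<or> down E R' w \<subseteq> down E R w"
proof (rule ccontr)
  assume "\<not> ?thesis"
  then obtain w where "w \<in> E"
    and incomparable: "\<not> down E R w \<subseteq> down E R' w" "\<not> down E R' w \<subseteq> down E R w"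
    by blast
  define g :: "'e \<rightharpoonup> 'v" where "g x = Some (SOME v. v \<in> I x)" for x
  have g_value: "\<forall>x\<in>down E S w. the (g x) \<in> I x" for S
    using nonempty unfolding g_def down_def by (simp add: some_in_eq)
  define h h' where "h = g |` down E R w" and "h' = g |` down E R' w"
  have "dom g = UNIV"
    unfolding g_def by auto
  then have dom_h: "dom h = down E R w" "dom h' = down E R' w"
    unfolding h_def h'_def by simp_all
  have "h \<in> \<Theta>" "h' \<in> \<Theta>'"
    unfolding h_def h'_def using \<open>w \<in> E\<close> \<open>dom g = UNIV\<close> g_value
    by (simp_all add: restrict_in_Hist)
  then have Ext_h: "h \<in> Ext \<Theta> \<union> Ext \<Theta>'" "h' \<in> Ext \<Theta> \<union> Ext \<Theta>'"
    using subset_Ext by blast+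
  have "w \<in> dom h" "w \<in> dom h'"
    using dom_h in_down_self[OF causal_R \<open>w \<in> E\<close>] in_down_self[OF causal_R' \<open>w \<in> E\<close>] by simp_all
  have "D = dom h" if "D \<in> {down E R w, down E R' w}" "D \<subseteq> dom h" for D
    using that dom_h incomparable by auto
  note h_prime = in_meet_tips[OF Ext_h(1) \<open>w \<in> dom h\<close> this]
  have "D = dom h'" if "D \<in> {down E R w, down E R' w}" "D \<subseteq> dom h'" for D
    using that dom_h incomparable by auto
  note h'_prime = in_meet_tips[OF Ext_h(2) \<open>w \<in> dom h'\<close> this]
  define k where "k = join {h, h'}"
  have "compatible {h, h'}"
    by (rule compatible_if_map_le[where g = g]) (auto simp: h_def h'_def restrict_map_le)
  then have "h \<subseteq>\<^sub>m k" "h' \<subseteq>\<^sub>m k" and "k \<in> Ext (meet \<Theta> \<Theta>')"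
    unfolding k_def using h_prime(1) h'_prime(1) by (simp_all add: map_le_join join_in_Ext)
  moreover have "w \<in> dom k"
    using \<open>w \<in> dom h\<close> map_le_implies_dom_le[OF \<open>h \<subseteq>\<^sub>m k\<close>] by blast
  moreover have "h \<noteq> h'"
    using dom_h incomparable by auto
  ultimately show False
    using tight h_prime h'_prime unfolding tight_def by blast
qed

lemma tight_meet_if_comparable:
  assumes comparable: "\<forall>w\<in>E. down E R w \<subseteq> down E R' w \<or> down E R' w \<subseteq> down E R w"
  shows "tight (meet \<Theta> \<Theta>')"
  unfolding tight_def
proof (intro ballI)
  fix k w assume "k \<in> Ext (meet \<Theta> \<Theta>')" "w \<in> dom k"
  then have k_covered: "k \<in> covered (\<Theta> \<union> \<Theta>')"
    using Ext_meet_subset_covered by blast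
  define S where "S = down E R w \<inter> down E R' w"
  have S_subset: "S \<subseteq> dom f" if "f \<in> covered (\<Theta> \<union> \<Theta>')" "w \<in> dom f" for f
    using covered_down_subset_dom[OF that] unfolding S_def by blast
  have S_dom: "S \<subseteq> dom k"
    using S_subset[OF k_covered \<open>w \<in> dom k\<close>] .
  define h where "h = k |` S"
  have dom_h: "dom h = S"
    unfolding h_def using S_dom by auto
  have "w \<in> E"
    using covered_value[OF k_covered \<open>w \<in> dom k\<close>] by blast
  have S_values: "\<forall>x\<in>S. the (k x) \<in> I x"
    using covered_value[OF k_covered] S_dom by blast
  have "S = down E R w \<or> S = down E R' w"
    using comparable \<open>w \<in> E\<close> unfolding S_def by blast
  then have "h \<in> \<Theta> \<union> \<Theta>'"
    using restrict_in_Hist[OF \<open>w \<in> E\<close>, of _ k I] S_dom S_values unfolding h_def by auto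
  moreover have "w \<in> dom h"
    unfolding dom_h S_def by (simp add: \<open>w \<in> E\<close> in_down_self causal_R causal_R')
  ultimately have prime: "h \<in> meet \<Theta> \<Theta>'" "w \<in> tips (meet \<Theta> \<Theta>') h"
    using in_meet_tips[of h w] subset_Ext dom_h unfolding S_def by blast+
  have "h \<subseteq>\<^sub>m k"
    unfolding h_def by (rule restrict_map_le)
  moreover have "h' = h" if "h' \<in> meet \<Theta> \<Theta>'" "h' \<subseteq>\<^sub>m k" "w \<in> tips (meet \<Theta> \<Theta>') h'" for h'
  proof -
    have "h' \<in> covered (\<Theta> \<union> \<Theta>')"
      using that(1) subset_Ext Ext_meet_subset_covered by blast
    moreover have "w \<in> dom h'"
      using that(3) unfolding in_tips_iff by blast
    ultimately have "dom h \<subseteq> dom h'"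
      using S_subset dom_h by simp
    then have "h \<subseteq>\<^sub>m h'"
      by (rule map_le_if_dom_subset[OF \<open>h \<subseteq>\<^sub>m k\<close> that(2)])
    then show "h' = h"
      using that(3) prime(1) subset_Ext \<open>w \<in> dom h\<close> unfolding in_tips_iff by blast
  qed
  ultimately show "\<exists>!h. h \<in> meet \<Theta> \<Theta>' \<and> h \<subseteq>\<^sub>m k \<and> w \<in> tips (meet \<Theta> \<Theta>') h"
    using prime by blast
qed

end

theorem theorem3:
  fixes E :: "'e set" and R R' :: "'e rel" and I :: "'e \<Rightarrow> 'v set"
  assumes "finite E"
    and "causal_order E R" and "causal_order E R'"
    and "\<forall>w\<in>E. I w \<noteq> {} \<and> finite (I w)"
  shows "tight (meet (Hist E R I) (Hist E R' I)) \<longleftrightarrow>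
         (\<forall>w\<in>E. down E R w \<subseteq> down E R' w \<or> down E R' w \<subseteq> down E R w)"
proof -
  interpret two_causal_orders E R R' I
    using assms(2,3) by unfold_locales
  show ?thesis
    using comparable_if_tight_meet tight_meet_if_comparable assms(4) by blast
qed

end
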